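(* Let $a,b,c,d\ge0$ be integers and $\mathcal Z=R_{a+b,c}\cup R_{a,c+d}$. Then $\gamma_{\rm thin}(\mathcal Z)\ge bc+ad-b-d$.
   Context: $\mathbb Z_+=\{0,1,2,\dots\}$, $R_{a,b}=([0,a-1]\times[0,b-1])\cap\mathbb Z_+^2$ (empty if $a=0$ or $b=0$); a zero-set is a union of such rectangles. $\mathrm{row}(x,A),\mathrm{col}(x,A)$ count points of $A$ on the horizontal/vertical line through $x$; $\mathcal T(A)=A\cup\{x\notin A:(\mathrm{row}(x,A),\mathrm{col}(x,A))\notin\mathcal Z\}$; $A$ spans if $\bigcup_t\mathcal T^t(A)=\mathbb Z_+^2$. A set is thin if each of its points has no other point of the set on its horizontal line or no other point of the set on its vertical line; $\gamma_{\rm thin}(\mathcal Z)$ is the minimal size of a thin finite spanning set. *)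

theory Defs
  imports Main "HOL-Library.Extended_Nat"
begin

type_synonym point = "nat \<times> nat"

definition Rect :: "nat \<Rightarrow> nat \<Rightarrow> point set" where
  "Rect a b = {(i, j). i < a \<and> j < b}"

definition ecount :: "point set \<Rightarrow> enat" where
  "ecount S = (if finite S then enat (card S) else \<infinity>)"

definition row :: "point \<Rightarrow> point set \<Rightarrow> enat" where
  "row x A = ecount {y \<in> A. snd y = snd x}"

definition col :: "point \<Rightarrow> point set \<Rightarrow> enat" where
  "col x A = ecount {y \<in> A. fst y = fst x}"

definition in_zero :: "point set \<Rightarrow> enat \<Rightarrow> enat \<Rightarrow> bool" where
  "in_zero Z r c = (\<exists>i j. (i, j) \<in> Z \<and> r = enat i \<and> c = enat j)"

definition T :: "point set \<Rightarrow> point set \<Rightarrow> point set" where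
  "T Z A = A \<union> {x. x \<notin> A \<and> \<not> in_zero Z (row x A) (col x A)}"

definition spans :: "point set \<Rightarrow> point set \<Rightarrow> bool" where
  "spans Z A = ((\<Union>t. (T Z ^^ t) A) = UNIV)"

definition thin :: "point set \<Rightarrow> bool" where
  "thin A = (\<forall>x\<in>A. (\<forall>y\<in>A. snd y = snd x \<longrightarrow> y = x) \<or> (\<forall>y\<in>A. fst y = fst x \<longrightarrow> y = x))"

definition gamma_thin :: "point set \<Rightarrow> enat" where
  "gamma_thin Z = (INF A \<in> {A. finite A \<and> thin A \<and> spans Z A}. enat (card A))"

end

theory Submission
  imports Defs
begin

(* Follow the infection from a thin spanning set A one point at a time; a finite
   prefix of this process fills any finite region, because the zero-set is finite and
   down-closed.  Call a column saturated once it holds c + d points and a row once it holds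
   a + b points, and fix the a - 1 columns and the c - 1 rows that saturate first.
   When one of these columns saturates, its points in rows with fewer than a points are
   initial, and of the remaining ones at most c - 1 lie in the chosen rows; so at least
   d + 1 of them are initial or "hits" of a further row holding a points.  A hit of row r
   is paid for by initial points of r whose columns were still unsaturated when r reached
   a points.  This charges (a - 1)(d + 1) distinct points of A, and the transposed argument
   charges another (c - 1)(b + 1), disjoint from the first ones by thinness and timing.
   As (a - 1)(d + 1) + (c - 1)(b + 1) >= bc + ad - b - d when a, c >= 1, the bound follows.
   For a = 0 the zero-set is the rectangle R_{b,c}, which is also the L-shape for
   (1, b - 1, c, 0) unless b <= 1; for b = 1 the set A must occupy c rows.  The case c = 0
   is the transposed one. *)

section \<open>Points on lines\<close>

definition row_count :: "point set \<Rightarrow> nat \<Rightarrow> nat" where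
  "row_count S j = card {y \<in> S. snd y = j}"

definition col_count :: "point set \<Rightarrow> nat \<Rightarrow> nat" where
  "col_count S i = card {y \<in> S. fst y = i}"

lemma row_count_mono: "finite S' \<Longrightarrow> S \<subseteq> S' \<Longrightarrow> row_count S j \<le> row_count S' j"
  unfolding row_count_def by (rule card_mono) auto

lemma col_count_mono: "finite S' \<Longrightarrow> S \<subseteq> S' \<Longrightarrow> col_count S i \<le> col_count S' i"
  unfolding col_count_def by (rule card_mono) auto

lemma pair_mem_swap_image [simp]: "(x, y) \<in> prod.swap ` Z \<longleftrightarrow> (y, x) \<in> Z"
  by force

lemma row_count_swap [simp]: "row_count (prod.swap ` S) j = col_count S j"
proof -
  have "{y \<in> prod.swap ` S. snd y = j} = prod.swap ` {y \<in> S. fst y = j}" by force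
  then show ?thesis
    unfolding row_count_def col_count_def by (simp add: card_image)
qed

lemma col_count_swap [simp]: "col_count (prod.swap ` S) i = row_count S i"
  using row_count_swap[of "prod.swap ` S" i] by (simp add: image_image)

lemma thin_swap [simp]: "thin (prod.swap ` A) \<longleftrightarrow> thin A"
  unfolding thin_def by (simp add: prod_eq_iff disj_commute)

lemma thin_row_or_col_le_1:
  assumes "thin A" "x \<in> A"
  shows "row_count A (snd x) \<le> 1 \<or> col_count A (fst x) \<le> 1"
proof -
  have "{y \<in> A. snd y = snd x} \<subseteq> {x} \<or> {y \<in> A. fst y = fst x} \<subseteq> {x}"
    using assms unfolding thin_def by blast
  then show ?thesis
    unfolding row_count_def col_count_def using card_mono[of "{x}"] by fastforce
qed

lemma card_le_row_count:
  assumes "finite S" "W \<subseteq> {y \<in> S. snd y = j}"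
  shows "card W \<le> row_count S j"
  unfolding row_count_def using assms by (intro card_mono) auto

lemma card_le_col_count:
  assumes "finite S" "W \<subseteq> {y \<in> S. fst y = i}"
  shows "card W \<le> col_count S i"
  unfolding col_count_def using assms by (intro card_mono) auto

lemma finite_col_count_ge: "finite S \<Longrightarrow> 0 < m \<Longrightarrow> finite {i. m \<le> col_count S i}"
proof -
  assume "finite S" "0 < m"
  have "{i. m \<le> col_count S i} \<subseteq> fst ` S"
  proof
    fix i assume "i \<in> {i. m \<le> col_count S i}"
    then have "0 < card {y \<in> S. fst y = i}" using \<open>0 < m\<close> by (simp add: col_count_def)
    then have "{y \<in> S. fst y = i} \<noteq> {}" by (simp add: card_gt_0_iff)
    then show "i \<in> fst ` S" by force
  qed
  then show ?thesis using \<open>finite S\<close> finite_subset by blast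
qed

lemma finite_row_count_ge: "finite S \<Longrightarrow> 0 < m \<Longrightarrow> finite {j. m \<le> row_count S j}"
  using finite_col_count_ge[of "prod.swap ` S" m] by simp

lemma obtain_finite_subset_with_card:
  assumes "finite R \<Longrightarrow> k \<le> card R"
  obtains W where "W \<subseteq> R" "finite W" "card W = k"
proof (cases "finite R")
  case True
  then show ?thesis using obtain_subset_with_card_n[of k R] assms that by blast
next
  case False
  then show ?thesis using infinite_arbitrarily_large[of R k] that by blast
qed

lemma Least_threshold:
  fixes f :: "nat \<Rightarrow> nat"
  assumes "m \<le> f N"
  shows "(LEAST k. m \<le> f k) \<le> N" "m \<le> f (LEAST k. m \<le> f k)"
    and "k < (LEAST k. m \<le> f k) \<Longrightarrow> f k < m"
  using assms by (auto intro: Least_le LeastI dest: not_less_Least)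

lemma subset_comparable_with_chain:
  fixes F :: "nat \<Rightarrow> 'a set"
  assumes "mono F" "\<And>t. finite (F t)" "m \<le> card (F N)"
  obtains X where "card X = m" "X \<subseteq> F N" "\<And>t. F t \<subseteq> X \<or> X \<subseteq> F t"
proof -
  define \<tau> where "\<tau> = (LEAST k. m \<le> card (F k))"
  note \<tau> = Least_threshold[of m "card \<circ> F" N, simplified, folded \<tau>_def, OF assms(3)]
  define L where "L = (if \<tau> = 0 then {} else F (\<tau> - 1))"
  have "card L \<le> m" "L \<subseteq> F \<tau>"
    using \<tau>(3)[of "\<tau> - 1"] monoD[OF assms(1), of "\<tau> - 1" \<tau>] by (auto simp: L_def)
  then obtain X where X: "L \<subseteq> X" "X \<subseteq> F \<tau>" "card X = m"
    using exists_subset_between[of L m "F \<tau>"] \<tau>(2) assms(2) by blast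
  have "F t \<subseteq> X \<or> X \<subseteq> F t" for t
  proof (cases "t < \<tau>")
    case True
    then have "F t \<subseteq> L" using monoD[OF assms(1), of t "\<tau> - 1"] by (auto simp: L_def)
    then show ?thesis using X(1) by blast
  next
    case False
    then show ?thesis using X(2) monoD[OF assms(1), of \<tau> t] by auto
  qed
  moreover have "X \<subseteq> F N" using X(2) monoD[OF assms(1) \<tau>(1)] by blast
  ultimately show ?thesis using that X(3) by blast
qed

section \<open>Infection sequences\<close>

definition down_closed :: "point set \<Rightarrow> bool" where
  "down_closed Z \<longleftrightarrow> (\<forall>i j i' j'. (i, j) \<in> Z \<longrightarrow> i' \<le> i \<longrightarrow> j' \<le> j \<longrightarrow> (i', j') \<in> Z)"

lemma down_closedD: "down_closed Z \<Longrightarrow> (i, j) \<in> Z \<Longrightarrow> i' \<le> i \<Longrightarrow> j' \<le> j \<Longrightarrow> (i', j') \<in> Z"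
  unfolding down_closed_def by blast

definition infected :: "point set \<Rightarrow> (nat \<Rightarrow> point) \<Rightarrow> nat \<Rightarrow> point set" where
  "infected A p k = A \<union> p ` {..<k}"

definition infection_sequence :: "point set \<Rightarrow> point set \<Rightarrow> (nat \<Rightarrow> point) \<Rightarrow> nat \<Rightarrow> bool" where
  "infection_sequence Z A p n \<longleftrightarrow>
     (\<forall>k<n. (row_count (infected A p k) (snd (p k)), col_count (infected A p k) (fst (p k))) \<notin> Z)"

definition eventually_infects :: "point set \<Rightarrow> point set \<Rightarrow> point set \<Rightarrow> bool" where
  "eventually_infects Z A F \<longleftrightarrow> (\<exists>p n. infection_sequence Z A p n \<and> F \<subseteq> infected A p n)"

(* Line counts are cardinalities, hence only meaningful on finite supersets. *)
definition infectable :: "point set \<Rightarrow> point set \<Rightarrow> point \<Rightarrow> bool" where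
  "infectable Z W x \<longleftrightarrow>
     (\<forall>S. finite S \<longrightarrow> W \<subseteq> S \<longrightarrow> (row_count S (snd x), col_count S (fst x)) \<notin> Z)"

lemma infected_0 [simp]: "infected A p 0 = A"
  unfolding infected_def by simp

lemma infected_Suc: "infected A p (Suc k) = insert (p k) (infected A p k)"
  unfolding infected_def by (auto simp: lessThan_Suc)

lemma infected_mono: "k \<le> k' \<Longrightarrow> infected A p k \<subseteq> infected A p k'"
  unfolding infected_def by auto

lemma finite_infected: "finite A \<Longrightarrow> finite (infected A p k)"
  unfolding infected_def by simp

lemma infected_swap: "infected (prod.swap ` A) (prod.swap \<circ> p) k = prod.swap ` infected A p k"
  unfolding infected_def by (simp add: image_Un image_comp)

lemma infection_sequence_swap:
  "infection_sequence Z A p n \<Longrightarrow>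
   infection_sequence (prod.swap ` Z) (prod.swap ` A) (prod.swap \<circ> p) n"
  unfolding infection_sequence_def infected_swap by simp

lemma eventually_infects_swap:
  assumes "eventually_infects Z A F"
  shows "eventually_infects (prod.swap ` Z) (prod.swap ` A) (prod.swap ` F)"
proof -
  obtain q n where "infection_sequence Z A q n" "F \<subseteq> infected A q n"
    using assms unfolding eventually_infects_def by blast
  then have "infection_sequence (prod.swap ` Z) (prod.swap ` A) (prod.swap \<circ> q) n"
    "prod.swap ` F \<subseteq> infected (prod.swap ` A) (prod.swap \<circ> q) n"
    by (auto simp: infection_sequence_swap infected_swap)
  then show ?thesis unfolding eventually_infects_def by blast
qed

lemma infectable_mono: "infectable Z W x \<Longrightarrow> W \<subseteq> W' \<Longrightarrow> infectable Z W' x"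
  unfolding infectable_def by blast

lemma infection_sequence_snoc:
  assumes seq: "infection_sequence Z A p n" and "finite A"
    and x: "infectable Z (infected A p n) x"
  shows "infection_sequence Z A (p(n := x)) (Suc n)"
    and "infected A (p(n := x)) (Suc n) = insert x (infected A p n)"
proof -
  have prefix: "infected A (p(n := x)) k = infected A p k" if "k \<le> n" for k
    using that unfolding infected_def by auto
  show "infected A (p(n := x)) (Suc n) = insert x (infected A p n)"
    unfolding infected_Suc prefix[OF order_refl] by simp
  have "(row_count (infected A p n) (snd x), col_count (infected A p n) (fst x)) \<notin> Z"
    using x finite_infected[OF \<open>finite A\<close>] unfolding infectable_def by blast
  then show "infection_sequence Z A (p(n := x)) (Suc n)"
    using seq unfolding infection_sequence_def
    by (auto simp: less_Suc_eq prefix)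
qed

lemma eventually_infects_extend:
  assumes "finite G" "finite A" "infection_sequence Z A p n"
    and "\<And>x. x \<in> G \<Longrightarrow> infectable Z (infected A p n) x"
  shows "eventually_infects Z A (infected A p n \<union> G)"
  using assms(1,4)
proof (induction G rule: finite_induct)
  case empty
  then show ?case using assms(3) unfolding eventually_infects_def by auto
next
  case (insert x G)
  then obtain q m where q: "infection_sequence Z A q m" "infected A p n \<union> G \<subseteq> infected A q m"
    unfolding eventually_infects_def by blast
  have "infectable Z (infected A q m) x"
    using infectable_mono insert.prems q(2) by blast
  then have "infection_sequence Z A (q(m := x)) (Suc m)"
    "infected A (q(m := x)) (Suc m) = insert x (infected A q m)"
    by (rule infection_sequence_snoc[OF q(1) \<open>finite A\<close>])+
  then show ?case using q(2) unfolding eventually_infects_def by blast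
qed

(* Since Z is bounded, finitely many points of B already force the infection of x; since Z
   is down-closed, they keep forcing it in every finite superset. *)
lemma infectable_witness:
  assumes "finite Z" "down_closed Z" and x: "\<not> in_zero Z (row x B) (col x B)"
  obtains W where "W \<subseteq> B" "finite W" "infectable Z W x"
proof -
  obtain M where "\<forall>k \<in> fst ` Z \<union> snd ` Z. k < M"
    using \<open>finite Z\<close> finite_nat_set_iff_bounded[of "fst ` Z \<union> snd ` Z"] by auto
  then have M: "\<And>i j. (i, j) \<in> Z \<Longrightarrow> i < M \<and> j < M" by force
  define R where "R = {y \<in> B. snd y = snd x}"
  define C where "C = {y \<in> B. fst y = fst x}"
  define i where "i = (if finite R then min (card R) M else M)"
  define j where "j = (if finite C then min (card C) M else M)"
  have ij: "(i, j) \<notin> Z"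
  proof
    assume ij: "(i, j) \<in> Z"
    have "i < M" "j < M" using M[OF ij] by auto
    then have "finite R \<and> i = card R" "finite C \<and> j = card C"
      unfolding i_def j_def by (cases "finite R"; cases "finite C"; simp)+
    then have "row x B = enat i" "col x B = enat j"
      unfolding row_def col_def ecount_def R_def[symmetric] C_def[symmetric] by simp_all
    then show False using x ij unfolding in_zero_def by blast
  qed
  have "finite R \<Longrightarrow> i \<le> card R" "finite C \<Longrightarrow> j \<le> card C"
    unfolding i_def j_def by simp_all
  then obtain Wr Wc where Wr: "Wr \<subseteq> R" "finite Wr" "card Wr = i"
    and Wc: "Wc \<subseteq> C" "finite Wc" "card Wc = j"
    using obtain_finite_subset_with_card by metis
  have "infectable Z (Wr \<union> Wc) x"
    unfolding infectable_def
  proof (intro allI impI)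
    fix S assume "finite S" "Wr \<union> Wc \<subseteq> S"
    then have "Wr \<subseteq> {y \<in> S. snd y = snd x}" "Wc \<subseteq> {y \<in> S. fst y = fst x}"
      using Wr(1) Wc(1) by (auto simp: R_def C_def)
    then have "i \<le> row_count S (snd x)" "j \<le> col_count S (fst x)"
      using card_le_row_count card_le_col_count \<open>finite S\<close> Wr(3) Wc(3) by auto
    then show "(row_count S (snd x), col_count S (fst x)) \<notin> Z"
      using ij down_closedD[OF \<open>down_closed Z\<close>] by blast
  qed
  moreover have "R \<subseteq> B" "C \<subseteq> B" unfolding R_def C_def by auto
  then have "Wr \<union> Wc \<subseteq> B" using Wr(1) Wc(1) by blast
  ultimately show ?thesis using that Wr Wc by blast
qed

lemma T_increasing: "B \<subseteq> T Z B"
  unfolding T_def by blast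

lemma eventually_infects_level:
  assumes "finite Z" "down_closed Z" "finite A"
  shows "finite F \<Longrightarrow> F \<subseteq> (T Z ^^ t) A \<Longrightarrow> eventually_infects Z A F"
proof (induction t arbitrary: F)
  case 0
  have "infection_sequence Z A p 0" for p
    unfolding infection_sequence_def by simp
  with "0.prems"(2) show ?case unfolding eventually_infects_def by fastforce
next
  case (Suc t)
  define B where "B = (T Z ^^ t) A"
  define G where "G = F - B"
  have FB: "F \<subseteq> T Z B" using Suc.prems(2) by (simp add: B_def)
  have "\<exists>W. W \<subseteq> B \<and> finite W \<and> infectable Z W x" if "x \<in> G" for x
  proof -
    have "x \<in> T Z B" "x \<notin> B" using FB that by (auto simp: G_def)
    then have "\<not> in_zero Z (row x B) (col x B)" unfolding T_def by blast
    then show ?thesis by (rule infectable_witness[OF assms(1,2)]) blast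
  qed
  then have "\<forall>x \<in> G. \<exists>W. W \<subseteq> B \<and> finite W \<and> infectable Z W x" by blast
  then obtain W where W: "\<forall>x \<in> G. W x \<subseteq> B \<and> finite (W x) \<and> infectable Z (W x) x"
    by (rule bchoice[THEN exE])
  define F' where "F' = (F \<inter> B) \<union> \<Union>(W ` G)"
  have "finite G" using Suc.prems(1) by (simp add: G_def)
  then have "finite F'" using Suc.prems(1) W by (simp add: F'_def)
  moreover have "F' \<subseteq> B" using W by (auto simp: F'_def)
  ultimately obtain p n where p: "infection_sequence Z A p n" and F': "F' \<subseteq> infected A p n"
    using Suc.IH unfolding B_def eventually_infects_def by blast
  have "infectable Z (infected A p n) x" if "x \<in> G" for x
  proof -
    have "W x \<subseteq> infected A p n" using F' that by (auto simp: F'_def)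
    then show ?thesis using W that infectable_mono by blast
  qed
  then have "eventually_infects Z A (infected A p n \<union> G)"
    using eventually_infects_extend[OF \<open>finite G\<close> assms(3) p] by blast
  moreover have "F \<subseteq> infected A p n \<union> G" using F' by (auto simp: F'_def G_def)
  ultimately show ?case unfolding eventually_infects_def by blast
qed

lemma spans_eventually_infects:
  assumes "finite Z" "down_closed Z" "finite A" "spans Z A" "finite F"
  shows "eventually_infects Z A F"
proof -
  have mono: "incseq (\<lambda>t. (T Z ^^ t) A)"
    by (rule incseq_SucI) (simp add: T_increasing)
  have "\<exists>t. F \<subseteq> (T Z ^^ t) A"
    using \<open>finite F\<close>
  proof (induction F rule: finite_induct)
    case (insert x F)
    then obtain t where "F \<subseteq> (T Z ^^ t) A" by blast
    moreover have "x \<in> (\<Union>t. (T Z ^^ t) A)"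
      using \<open>spans Z A\<close> unfolding spans_def by simp
    then obtain t' where "x \<in> (T Z ^^ t') A" by blast
    ultimately have "insert x F \<subseteq> (T Z ^^ max t t') A"
      using monoD[OF mono, of t "max t t'"] monoD[OF mono, of t' "max t t'"] by auto
    then show ?case by blast
  qed simp
  then obtain t where "F \<subseteq> (T Z ^^ t) A" by blast
  then show ?thesis by (rule eventually_infects_level[OF assms(1-3,5)])
qed

(* An infected point in a new row would need at least m points in its column, but these
   all lie in distinct rows already occupied by A. *)
lemma card_occupied_rows_ge:
  assumes "finite A" and Z: "\<And>s. s < m \<Longrightarrow> (0, s) \<in> Z"
    and "eventually_infects Z A ({0} \<times> {..<m})"
  shows "m \<le> card (snd ` A)"
proof (rule ccontr)
  assume few: "\<not> m \<le> card (snd ` A)"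
  obtain p n where p: "infection_sequence Z A p n" "{0} \<times> {..<m} \<subseteq> infected A p n"
    using assms(3) unfolding eventually_infects_def by blast
  have "snd ` infected A p k \<subseteq> snd ` A" if "k \<le> n" for k
    using that
  proof (induction k)
    case (Suc k)
    let ?S = "infected A p k"
    have rows: "snd ` ?S \<subseteq> snd ` A" using Suc by simp
    have "snd (p k) \<in> snd ` A"
    proof (rule ccontr)
      assume new: "snd (p k) \<notin> snd ` A"
      have "snd y \<noteq> snd (p k)" if "y \<in> ?S" for y
        using subsetD[OF rows imageI[OF that]] new by metis
      then have "{y \<in> ?S. snd y = snd (p k)} = {}" by blast
      then have "row_count ?S (snd (p k)) = 0" unfolding row_count_def by (simp only: card.empty)
      moreover have "col_count ?S (fst (p k)) \<le> card (snd ` A)"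
      proof -
        have "inj_on snd {y \<in> ?S. fst y = fst (p k)}" by (rule inj_onI) (auto simp: prod_eq_iff)
        then have "col_count ?S (fst (p k)) = card (snd ` {y \<in> ?S. fst y = fst (p k)})"
          unfolding col_count_def by (simp add: card_image)
        also have "\<dots> \<le> card (snd ` A)"
          using rows \<open>finite A\<close> by (intro card_mono) auto
        finally show ?thesis .
      qed
      ultimately have "(row_count ?S (snd (p k)), col_count ?S (fst (p k))) \<in> Z"
        using Z few by simp
      moreover have "k < n" using Suc.prems by simp
      ultimately show False using p(1) unfolding infection_sequence_def by blast
    qed
    then show ?case using rows by (simp add: infected_Suc)
  qed simp
  then have "{..<m} \<subseteq> snd ` A" using p(2) by force
  then have "card {..<m} \<le> card (snd ` A)" using \<open>finite A\<close> by (intro card_mono) auto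
  then show False using few by simp
qed

section \<open>Runs of the L-shaped zero-set\<close>

definition Lshape :: "nat \<Rightarrow> nat \<Rightarrow> nat \<Rightarrow> nat \<Rightarrow> point set" where
  "Lshape a b c d = Rect (a + b) c \<union> Rect a (c + d)"

lemma mem_Lshape: "(r, s) \<in> Lshape a b c d \<longleftrightarrow> r < a + b \<and> s < c \<or> r < a \<and> s < c + d"
  unfolding Lshape_def Rect_def by simp

lemma Lshape_swap: "prod.swap ` Lshape a b c d = Lshape c d a b"
proof -
  have "x \<in> prod.swap ` Lshape a b c d \<longleftrightarrow> x \<in> Lshape c d a b" for x
    by (cases x) (auto simp: mem_Lshape)
  then show ?thesis by blast
qed

lemma finite_Rect: "finite (Rect a b)"
proof -
  have "Rect a b = {..<a} \<times> {..<b}" by (auto simp: Rect_def)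
  then show ?thesis by simp
qed

lemma finite_Lshape: "finite (Lshape a b c d)"
  unfolding Lshape_def by (simp add: finite_Rect)

lemma down_closed_Lshape: "down_closed (Lshape a b c d)"
  unfolding down_closed_def mem_Lshape by linarith

locale infection_run =
  fixes a b c d :: nat and A :: "point set" and p :: "nat \<Rightarrow> point" and n :: nat
  assumes finite_A: "finite A" and thin_A: "thin A"
    and sequence: "infection_sequence (Lshape a b c d) A p n"
    and a_pos: "1 \<le> a" and c_pos: "1 \<le> c" and ab: "2 \<le> a + b" and cd: "2 \<le> c + d"
    and box: "Rect (a + b) (c + d) \<subseteq> infected A p n"
begin

abbreviation S :: "nat \<Rightarrow> point set" where "S k \<equiv> infected A p k"
abbreviation rc :: "nat \<Rightarrow> nat \<Rightarrow> nat" where "rc k j \<equiv> row_count (S k) j"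
abbreviation cc :: "nat \<Rightarrow> nat \<Rightarrow> nat" where "cc k i \<equiv> col_count (S k) i"

definition sat_cols :: "nat \<Rightarrow> nat set" where "sat_cols t = {i. c + d \<le> cc t i}"
definition sat_rows :: "nat \<Rightarrow> nat set" where "sat_rows t = {j. a + b \<le> rc t j}"
definition col_sat_time :: "nat \<Rightarrow> nat" where "col_sat_time i = (LEAST k. c + d \<le> cc k i)"
definition row_sat_time :: "nat \<Rightarrow> nat" where "row_sat_time j = (LEAST k. a + b \<le> rc k j)"

definition row_a_time :: "nat \<Rightarrow> nat" where "row_a_time r = (LEAST k. a \<le> rc k r)"

lemma finite_S: "finite (S k)"
  using finite_A by (rule finite_infected)

lemma rc_mono: "k \<le> k' \<Longrightarrow> rc k j \<le> rc k' j"
  using row_count_mono[OF finite_S infected_mono] .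

lemma cc_mono: "k \<le> k' \<Longrightarrow> cc k i \<le> cc k' i"
  using col_count_mono[OF finite_S infected_mono] .

lemma transposed: "infection_run c d a b (prod.swap ` A) (prod.swap \<circ> p) n"
proof
  have "Rect (c + d) (a + b) = prod.swap ` Rect (a + b) (c + d)"
    unfolding Rect_def by force
  then show "Rect (c + d) (a + b) \<subseteq> infected (prod.swap ` A) (prod.swap \<circ> p) n"
    using box by (auto simp: infected_swap)
  show "infection_sequence (Lshape c d a b) (prod.swap ` A) (prod.swap \<circ> p) n"
    using infection_sequence_swap[OF sequence] by (simp add: Lshape_swap)
qed (use finite_A thin_A a_pos c_pos ab cd in auto)

lemma finite_sat_cols: "finite (sat_cols t)"
  unfolding sat_cols_def by (rule finite_col_count_ge[OF finite_S]) (use cd in linarith)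

lemma finite_sat_rows: "finite (sat_rows t)"
  unfolding sat_rows_def by (rule finite_row_count_ge[OF finite_S]) (use ab in linarith)

lemma mono_sat_cols: "mono sat_cols"
  unfolding sat_cols_def by (rule monoI) (auto intro: order_trans cc_mono)

lemma mono_sat_rows: "mono sat_rows"
  unfolding sat_rows_def by (rule monoI) (auto intro: order_trans rc_mono)

lemma card_sat_cols: "a - 1 \<le> card (sat_cols n)"
proof -
  have "c + d \<le> cc n i" if "i < a" for i
  proof -
    have "{i} \<times> {..<c + d} \<subseteq> Rect (a + b) (c + d)" using that by (auto simp: Rect_def)
    then have "{i} \<times> {..<c + d} \<subseteq> {y \<in> S n. fst y = i}" using box by auto
    from card_le_col_count[OF finite_S this] show ?thesis by (simp add: card_cartesian_product)
  qed
  then have "{..<a - 1} \<subseteq> sat_cols n" by (auto simp: sat_cols_def)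
  from card_mono[OF finite_sat_cols this] show ?thesis by simp
qed

lemma card_sat_rows: "c - 1 \<le> card (sat_rows n)"
proof -
  have "a + b \<le> rc n j" if "j < c" for j
  proof -
    have "{..<a + b} \<times> {j} \<subseteq> Rect (a + b) (c + d)" using that by (auto simp: Rect_def)
    then have "{..<a + b} \<times> {j} \<subseteq> {y \<in> S n. snd y = j}" using box by auto
    from card_le_row_count[OF finite_S this] show ?thesis by (simp add: card_cartesian_product)
  qed
  then have "{..<c - 1} \<subseteq> sat_rows n" by (auto simp: sat_rows_def)
  from card_mono[OF finite_sat_rows this] show ?thesis by simp
qed

lemma step_allowed: "k < n \<Longrightarrow> (rc k (snd (p k)), cc k (fst (p k))) \<notin> Lshape a b c d"
  using sequence unfolding infection_sequence_def by blast

lemma added_point_counts: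
  assumes "y \<in> S t" "y \<notin> A" "t \<le> n"
  obtains m where "m < t" "a \<le> rc m (snd y) \<or> c + d \<le> cc m (fst y)"
proof -
  obtain m where "m < t" "y = p m" using assms(1,2) unfolding infected_def by blast
  with step_allowed[of m] assms(3) show ?thesis
    using that by (auto simp: mem_Lshape)
qed

lemma rc_Suc:
  assumes "rc k j < rc (Suc k) j"
  shows "snd (p k) = j"
proof (rule ccontr)
  assume "snd (p k) \<noteq> j"
  then have "{y \<in> S (Suc k). snd y = j} = {y \<in> S k. snd y = j}" by (auto simp: infected_Suc)
  then show False using assms by (simp add: row_count_def)
qed

lemma cc_Suc:
  assumes "cc k i < cc (Suc k) i"
  shows "fst (p k) = i"
proof (rule ccontr)
  assume "fst (p k) \<noteq> i"
  then have "{y \<in> S (Suc k). fst y = i} = {y \<in> S k. fst y = i}" by (auto simp: infected_Suc)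
  then show False using assms by (simp add: col_count_def)
qed

lemma both_lines_grow:
  assumes "k < n" "rc k j < rc (Suc k) j" "cc k i < cc (Suc k) i"
  shows "(rc k j, cc k i) \<notin> Lshape a b c d"
  using step_allowed[OF assms(1)] rc_Suc[OF assms(2)] cc_Suc[OF assms(3)] by simp

lemma col_sat_time:
  assumes "i \<in> sat_cols n"
  shows "col_sat_time i \<le> n" "c + d \<le> cc (col_sat_time i) i"
    and "k < col_sat_time i \<Longrightarrow> cc k i < c + d"
  using Least_threshold[of "c + d" "\<lambda>k. cc k i" n] assms
  unfolding col_sat_time_def sat_cols_def by auto

lemma row_sat_time:
  assumes "j \<in> sat_rows n"
  shows "row_sat_time j \<le> n" "a + b \<le> rc (row_sat_time j) j"
    and "k < row_sat_time j \<Longrightarrow> rc k j < a + b"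
  using Least_threshold[of "a + b" "\<lambda>k. rc k j" n] assms
  unfolding row_sat_time_def sat_rows_def by auto

lemma row_a_time:
  assumes "a \<le> rc n r"
  shows "row_a_time r \<le> n" "a \<le> rc (row_a_time r) r"
    and "k < row_a_time r \<Longrightarrow> rc k r < a"
  using Least_threshold[of a "\<lambda>k. rc k r" n] assms
  unfolding row_a_time_def by auto

lemma initial_of_saturating_col:
  assumes "i \<in> sat_cols n" "y \<in> S (col_sat_time i)" "fst y = i"
    and "rc (col_sat_time i) (snd y) < a"
  shows "y \<in> A"
proof (rule ccontr)
  assume "y \<notin> A"
  note t = col_sat_time[OF assms(1)]
  obtain m where "m < col_sat_time i" "a \<le> rc m (snd y) \<or> c + d \<le> cc m (fst y)"
    by (rule added_point_counts[OF assms(2) \<open>y \<notin> A\<close> t(1)])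
  then show False
    using t(3) assms(3,4) rc_mono[of m "col_sat_time i" "snd y"] by fastforce
qed

lemma initial_of_row_at_a:
  assumes "a \<le> rc n r" "y \<in> S (row_a_time r)" "snd y = r"
    and "cc (row_a_time r) (fst y) < c + d"
  shows "y \<in> A"
proof (rule ccontr)
  assume "y \<notin> A"
  note t = row_a_time[OF assms(1)]
  obtain m where "m < row_a_time r" "a \<le> rc m (snd y) \<or> c + d \<le> cc m (fst y)"
    by (rule added_point_counts[OF assms(2) \<open>y \<notin> A\<close> t(1)])
  then show False
    using t(3) assms(3,4) cc_mono[of m "row_a_time r" "fst y"] by fastforce
qed

lemma sat_col_sat_row_cross:
  assumes "i \<in> sat_cols n" "j \<in> sat_rows n"
  shows "a \<le> rc (col_sat_time i) j \<or> c \<le> cc (row_sat_time j) i"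
proof (cases "col_sat_time i \<le> row_sat_time j")
  case True
  then have "cc (col_sat_time i) i \<le> cc (row_sat_time j) i" by (rule cc_mono)
  then show ?thesis using col_sat_time(2)[OF assms(1)] by linarith
next
  case False
  then have "rc (row_sat_time j) j \<le> rc (col_sat_time i) j" by (intro rc_mono) simp
  then show ?thesis using row_sat_time(2)[OF assms(2)] by linarith
qed

lemma row_a_time_split:
  assumes "a \<le> rc n r"
  defines "t \<equiv> row_a_time r"
  shows "a \<le> card {y \<in> A. snd y = r \<and> cc t (fst y) < c + d} + card (sat_cols t)"
proof -
  note t = row_a_time[OF assms(1), folded t_def]
  define Y where "Y = {y \<in> S t. snd y = r}"
  define Y1 where "Y1 = {y \<in> Y. cc t (fst y) < c + d}"
  define Y2 where "Y2 = {y \<in> Y. c + d \<le> cc t (fst y)}"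
  have "a \<le> card Y" using t(2) by (simp add: Y_def row_count_def)
  moreover have "Y = Y1 \<union> Y2" by (auto simp: Y1_def Y2_def)
  then have "card Y \<le> card Y1 + card Y2" by (simp add: card_Un_le)
  moreover have "Y1 \<subseteq> {y \<in> A. snd y = r \<and> cc t (fst y) < c + d}"
    using initial_of_row_at_a[OF assms(1)] by (auto simp: Y1_def Y_def t_def)
  then have "card Y1 \<le> card {y \<in> A. snd y = r \<and> cc t (fst y) < c + d}"
    using finite_A by (intro card_mono) auto
  moreover have "inj_on fst Y2" by (rule inj_onI) (auto simp: Y2_def Y_def prod_eq_iff)
  then have "card Y2 = card (fst ` Y2)" by (simp add: card_image)
  moreover have "fst ` Y2 \<subseteq> sat_cols t" by (auto simp: Y2_def sat_cols_def)
  then have "card (fst ` Y2) \<le> card (sat_cols t)" by (intro card_mono finite_sat_cols)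
  ultimately show ?thesis by linarith
qed

end

section \<open>Charging initial points\<close>

(* Cs consists of a - 1 columns that saturate first and Rs of c - 1 rows that saturate
   first (ties broken arbitrarily): each is comparable with every stage of the chain. *)
locale infection_run_chains = infection_run +
  fixes Cs Rs :: "nat set"
  assumes card_Cs: "card Cs = a - 1" and Cs_sat: "Cs \<subseteq> sat_cols n"
    and Cs_chain: "\<And>t. sat_cols t \<subseteq> Cs \<or> Cs \<subseteq> sat_cols t"
    and card_Rs: "card Rs = c - 1" and Rs_sat: "Rs \<subseteq> sat_rows n"
    and Rs_chain: "\<And>t. sat_rows t \<subseteq> Rs \<or> Rs \<subseteq> sat_rows t"
begin

definition other_rows :: "nat set" where "other_rows = {r. a \<le> rc n r} - Rs"

definition hits :: "nat \<Rightarrow> nat \<Rightarrow> bool" where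
  "hits i r \<longleftrightarrow> (i, r) \<in> S (col_sat_time i) \<and> a \<le> rc (col_sat_time i) r"

definition col_charge :: "nat \<Rightarrow> point set" where
  "col_charge i = {y \<in> A. fst y = i \<and> rc (col_sat_time i) (snd y) < a}"

(* Requiring two initial points in row r keeps these charges disjoint from their analogues
   in the transposed run, as A is thin. *)
definition row_charge :: "nat \<Rightarrow> point set" where
  "row_charge r = (if 2 \<le> row_count A r
     then {y \<in> A. snd y = r \<and> cc (row_a_time r) (fst y) < c + d} else {})"

definition charged :: "point set" where
  "charged = (\<Union>i\<in>Cs. col_charge i) \<union> (\<Union>r\<in>other_rows. row_charge r)"

lemma finite_Cs: "finite Cs"
  using Cs_sat finite_sat_cols finite_subset by blast

lemma finite_Rs: "finite Rs"
  using Rs_sat finite_sat_rows finite_subset by blast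

lemma finite_other_rows: "finite other_rows"
proof -
  have "finite {r. a \<le> rc n r}" by (rule finite_row_count_ge[OF finite_S]) (use a_pos in linarith)
  then show ?thesis unfolding other_rows_def by blast
qed

lemma col_charge_bound:
  assumes "i \<in> Cs"
  shows "d + 1 \<le> card (col_charge i) + card {r \<in> other_rows. hits i r}"
proof -
  define t where "t = col_sat_time i"
  note t = col_sat_time[OF subsetD[OF Cs_sat assms], folded t_def]
  define X where "X = {y \<in> S t. fst y = i}"
  define X1 where "X1 = {y \<in> X. rc t (snd y) < a}"
  define X2 where "X2 = {y \<in> X. a \<le> rc t (snd y)}"
  have "c + d \<le> card X" using t(2) by (simp add: X_def col_count_def)
  moreover have "X = X1 \<union> X2" by (auto simp: X1_def X2_def)
  then have "card X \<le> card X1 + card X2" by (simp add: card_Un_le)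
  moreover have "X1 \<subseteq> col_charge i"
    using initial_of_saturating_col[OF subsetD[OF Cs_sat assms]]
    by (auto simp: X1_def X_def col_charge_def t_def)
  then have "card X1 \<le> card (col_charge i)"
    using finite_A by (intro card_mono) (auto simp: col_charge_def)
  moreover have "inj_on snd X2" by (rule inj_onI) (auto simp: X2_def X_def prod_eq_iff)
  then have "card X2 = card (snd ` X2)" by (simp add: card_image)
  moreover have "card (snd ` X2) \<le> card Rs + card {r \<in> other_rows. hits i r}"
  proof -
    have "snd ` X2 \<subseteq> Rs \<union> {r \<in> other_rows. hits i r}"
    proof
      fix r assume "r \<in> snd ` X2"
      then obtain y where "y \<in> S t" "y = (i, r)" "a \<le> rc t r" by (auto simp: X2_def X_def)
      moreover have "rc t r \<le> rc n r" using t(1) by (rule rc_mono)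
      ultimately show "r \<in> Rs \<union> {r \<in> other_rows. hits i r}"
        by (auto simp: other_rows_def hits_def t_def)
    qed
    then have "card (snd ` X2) \<le> card (Rs \<union> {r \<in> other_rows. hits i r})"
      using finite_Rs finite_other_rows by (intro card_mono) auto
    also have "\<dots> \<le> card Rs + card {r \<in> other_rows. hits i r}" by (rule card_Un_le)
    finally show ?thesis .
  qed
  ultimately show ?thesis using card_Rs c_pos by linarith
qed

(* Column i cannot saturate before row r reaches a points, nor at the same time: then the
   crossing point (i, r) would have completed both lines in one step, or (at time 0) would be
   an initial point on two long lines. *)
lemma hits_unsaturated:
  assumes "r \<in> other_rows" "i \<in> Cs" "hits i r"
  shows "i \<notin> sat_cols (row_a_time r)"
proof -
  define t where "t = row_a_time r"
  define s where "s = col_sat_time i"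
  have r: "a \<le> rc n r" using assms(1) by (simp add: other_rows_def)
  note tr = row_a_time[OF r, folded t_def]
  note ts = col_sat_time[OF subsetD[OF Cs_sat assms(2)], folded s_def]
  have hit: "(i, r) \<in> S s" "a \<le> rc s r" using assms(3) by (simp_all add: hits_def s_def)
  have "t \<le> s" unfolding t_def row_a_time_def using hit(2) by (rule Least_le)
  have "cc t i < c + d"
  proof (cases "t < s")
    case True
    then show ?thesis by (rule ts(3))
  next
    case False
    with \<open>t \<le> s\<close> have "s = t" by simp
    show ?thesis
    proof (cases t)
      case 0
      then have "(i, r) \<in> A" "a \<le> row_count A r" "c + d \<le> col_count A i"
        using hit tr(2) ts(2) \<open>s = t\<close> by simp_all
      then have "a \<le> 1" using thin_row_or_col_le_1[OF thin_A \<open>(i, r) \<in> A\<close>] cd by auto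
      then have "Cs = {}" using card_Cs finite_Cs by simp
      then show ?thesis using assms(2) by simp
    next
      case (Suc k)
      have "rc k r < a" "cc k i < c + d" using tr(3) ts(3) Suc \<open>s = t\<close> by simp_all
      moreover have "rc k r < rc (Suc k) r" "cc k i < cc (Suc k) i"
        using calculation tr(2) ts(2) Suc \<open>s = t\<close> by simp_all
      moreover have "k < n" using tr(1) Suc by simp
      ultimately show ?thesis using both_lines_grow[of k r i] by (simp add: mem_Lshape)
    qed
  qed
  then show ?thesis by (simp add: sat_cols_def t_def)
qed

lemma hits_le_row_charge:
  assumes "r \<in> other_rows"
  shows "card {i \<in> Cs. hits i r} \<le> card (row_charge r)"
proof (cases "{i \<in> Cs. hits i r} = {}")
  case False
  define t where "t = row_a_time r"
  define D where "D = {y \<in> A. snd y = r \<and> cc t (fst y) < c + d}"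
  have r: "a \<le> rc n r" using assms by (simp add: other_rows_def)
  have K: "{i \<in> Cs. hits i r} \<subseteq> Cs - sat_cols t"
    using hits_unsaturated[OF assms] by (auto simp: t_def)
  with False have "\<not> Cs \<subseteq> sat_cols t" by blast
  then have "sat_cols t \<subseteq> Cs" using Cs_chain by blast
  then have "card (Cs - sat_cols t) = a - 1 - card (sat_cols t)"
    using card_Cs finite_sat_cols by (simp add: card_Diff_subset)
  moreover have "card {i \<in> Cs. hits i r} \<le> card (Cs - sat_cols t)"
    using K finite_Cs by (intro card_mono) auto
  moreover have "card {i \<in> Cs. hits i r} \<noteq> 0"
    using False finite_Cs by simp
  moreover have "a \<le> card D + card (sat_cols t)"
    using row_a_time_split[OF r] by (simp add: D_def t_def)
  ultimately have "card {i \<in> Cs. hits i r} \<le> card D" "2 \<le> card D" by linarith+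
  moreover have "card D \<le> row_count A r"
    unfolding row_count_def D_def using finite_A by (intro card_mono) auto
  ultimately show ?thesis by (simp add: row_charge_def D_def t_def)
next
  case True
  then show ?thesis unfolding True by simp
qed

lemma col_charge_row_charge_disjoint:
  assumes "i \<in> Cs" "r \<in> other_rows"
  shows "col_charge i \<inter> row_charge r = {}"
proof (rule ccontr)
  assume "col_charge i \<inter> row_charge r \<noteq> {}"
  then obtain y where "y \<in> col_charge i" "y \<in> row_charge r" by blast
  then have y: "fst y = i" "snd y = r" "rc (col_sat_time i) r < a" "cc (row_a_time r) i < c + d"
    by (auto simp: col_charge_def row_charge_def split: if_splits)
  have r: "a \<le> rc n r" using assms(2) by (simp add: other_rows_def)
  show False
  proof (cases "row_a_time r \<le> col_sat_time i")
    case True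
    then have "rc (row_a_time r) r \<le> rc (col_sat_time i) r" by (rule rc_mono)
    then show False using row_a_time(2)[OF r] y(3) by linarith
  next
    case False
    then have "cc (col_sat_time i) i \<le> cc (row_a_time r) i" by (intro cc_mono) simp
    then show False using col_sat_time(2)[OF subsetD[OF Cs_sat assms(1)]] y(4) by linarith
  qed
qed

lemma charged_subset_A: "charged \<subseteq> A"
  by (auto simp: charged_def col_charge_def row_charge_def split: if_splits)

lemma finite_charges: "finite (col_charge i)" "finite (row_charge r)"
  using finite_A by (simp_all add: col_charge_def row_charge_def)

lemma card_charged: "(a - 1) * (d + 1) \<le> card charged"
proof -
  have "(a - 1) * (d + 1) \<le> (\<Sum>i\<in>Cs. card (col_charge i) + card {r \<in> other_rows. hits i r})"
    using sum_bounded_below[of Cs "d + 1"] col_charge_bound card_Cs by (simp add: mult.commute)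
  also have "\<dots> = (\<Sum>i\<in>Cs. card (col_charge i)) + (\<Sum>r\<in>other_rows. card {i \<in> Cs. hits i r})"
    using sum_multicount_gen[OF finite_Cs finite_other_rows, of hits] by (simp add: sum.distrib)
  also have "\<dots> \<le> (\<Sum>i\<in>Cs. card (col_charge i)) + (\<Sum>r\<in>other_rows. card (row_charge r))"
    using hits_le_row_charge by (simp add: sum_mono)
  also have "\<dots> = card charged"
  proof -
    have "card (\<Union>i\<in>Cs. col_charge i) = (\<Sum>i\<in>Cs. card (col_charge i))"
      using finite_Cs finite_charges by (intro card_UN_disjoint) (auto simp: col_charge_def)
    moreover have "card (\<Union>r\<in>other_rows. row_charge r) = (\<Sum>r\<in>other_rows. card (row_charge r))"
      using finite_other_rows finite_charges
      by (intro card_UN_disjoint) (auto simp: row_charge_def split: if_splits)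
    moreover have "(\<Union>i\<in>Cs. col_charge i) \<inter> (\<Union>r\<in>other_rows. row_charge r) = {}"
      using col_charge_row_charge_disjoint by blast
    ultimately show ?thesis
      unfolding charged_def using finite_Cs finite_other_rows finite_charges
      by (simp add: card_Un_disjoint)
  qed
  finally show ?thesis .
qed

lemma charged_cases:
  assumes "y \<in> charged"
  shows "fst y \<in> Cs \<and> rc (col_sat_time (fst y)) (snd y) < a
    \<or> snd y \<in> other_rows \<and> 2 \<le> row_count A (snd y)"
  using assms by (auto simp: charged_def col_charge_def row_charge_def split: if_splits)

lemma transposed_chains: "infection_run_chains c d a b (prod.swap ` A) (prod.swap \<circ> p) n Rs Cs"
proof -
  interpret T: infection_run c d a b "prod.swap ` A" "prod.swap \<circ> p" n by (rule transposed)
  have "T.sat_cols t = sat_rows t" "T.sat_rows t = sat_cols t" for t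
    by (simp_all add: T.sat_cols_def T.sat_rows_def sat_cols_def sat_rows_def infected_swap)
  then show ?thesis
    using card_Cs Cs_sat Cs_chain card_Rs Rs_sat Rs_chain
    by (intro infection_run_chains.intro transposed infection_run_chains_axioms.intro) simp_all
qed

(* The second assumption is what charged_cases yields for the mirror image of y in the
   transposed run. *)
lemma charged_disjoint_transposed:
  assumes "y \<in> charged"
    and "snd y \<in> Rs \<and> cc (row_sat_time (snd y)) (fst y) < c \<or> fst y \<notin> Cs \<and> 2 \<le> col_count A (fst y)"
  shows False
  using charged_cases[OF assms(1)] assms(2)
proof (elim disjE conjE)
  assume "fst y \<in> Cs" "rc (col_sat_time (fst y)) (snd y) < a"
    and "snd y \<in> Rs" "cc (row_sat_time (snd y)) (fst y) < c"
  then show False using sat_col_sat_row_cross[of "fst y" "snd y"] Cs_sat Rs_sat by auto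
next
  assume "2 \<le> row_count A (snd y)" "2 \<le> col_count A (fst y)"
  moreover have "y \<in> A" using assms(1) charged_subset_A by blast
  ultimately show False using thin_row_or_col_le_1[OF thin_A] by fastforce
qed (auto simp: other_rows_def)

(* The transposed run charges (c - 1)(b + 1) further initial points, disjoint from these. *)
lemma card_A_ge_charged: "(a - 1) * (d + 1) + (c - 1) * (b + 1) \<le> card A"
proof -
  interpret T: infection_run_chains c d a b "prod.swap ` A" "prod.swap \<circ> p" n Rs Cs
    by (rule transposed_chains)
  have T_col_sat_time: "T.col_sat_time j = row_sat_time j" for j
    by (simp add: T.col_sat_time_def row_sat_time_def infected_swap)
  have T_other_rows: "T.other_rows = {q. c \<le> cc n q} - Cs"
    by (simp add: T.other_rows_def infected_swap)
  have "y \<notin> charged" if "prod.swap y \<in> T.charged" for y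
    using T.charged_cases[OF that] charged_disjoint_transposed[of y]
    by (auto simp: T_col_sat_time T_other_rows infected_swap)
  then have disjoint: "charged \<inter> prod.swap ` T.charged = {}" by force
  have "charged \<union> prod.swap ` T.charged \<subseteq> A"
    using charged_subset_A T.charged_subset_A by (auto simp: image_subset_iff)
  then have "card (charged \<union> prod.swap ` T.charged) \<le> card A"
    using finite_A by (rule card_mono[rotated])
  moreover have "card (charged \<union> prod.swap ` T.charged) = card charged + card T.charged"
    using disjoint finite_subset[OF charged_subset_A finite_A]
      finite_subset[OF T.charged_subset_A T.finite_A]
    by (simp add: card_Un_disjoint card_image)
  ultimately show ?thesis using card_charged T.card_charged by linarith
qed

end

context infection_run
begin

lemma card_A_ge: "(a - 1) * (d + 1) + (c - 1) * (b + 1) \<le> card A"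
proof -
  obtain Cs where "card Cs = a - 1" "Cs \<subseteq> sat_cols n" "\<And>t. sat_cols t \<subseteq> Cs \<or> Cs \<subseteq> sat_cols t"
    using subset_comparable_with_chain[OF mono_sat_cols finite_sat_cols card_sat_cols] by blast
  moreover obtain Rs where "card Rs = c - 1" "Rs \<subseteq> sat_rows n" "\<And>t. sat_rows t \<subseteq> Rs \<or> Rs \<subseteq> sat_rows t"
    using subset_comparable_with_chain[OF mono_sat_rows finite_sat_rows card_sat_rows] by blast
  ultimately interpret infection_run_chains a b c d A p n Cs Rs
    by unfold_locales
  show ?thesis by (rule card_A_ge_charged)
qed

end

lemma Lshape_card_bound:
  assumes "finite A" "thin A" "\<And>F. finite F \<Longrightarrow> eventually_infects (Lshape a b c d) A F"
    and "1 \<le> a" "1 \<le> c" "2 \<le> a + b" "2 \<le> c + d"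
  shows "(a - 1) * (d + 1) + (c - 1) * (b + 1) \<le> card A"
proof -
  obtain p n where "infection_sequence (Lshape a b c d) A p n" "Rect (a + b) (c + d) \<subseteq> infected A p n"
    using assms(3)[OF finite_Rect] unfolding eventually_infects_def by blast
  with assms interpret infection_run a b c d A p n
    by unfold_locales
  show ?thesis by (rule card_A_ge)
qed

lemma Lshape_bound_a_c_pos:
  assumes "finite A" "thin A" "\<And>F. finite F \<Longrightarrow> eventually_infects (Lshape a b c d) A F"
    and "1 \<le> a" "1 \<le> c"
  shows "b * c + a * d \<le> card A + (b + d)"
proof (cases "2 \<le> a + b \<and> 2 \<le> c + d")
  case True
  then have "(a - 1) * (d + 1) + (c - 1) * (b + 1) \<le> card A"
    using Lshape_card_bound assms by blast
  moreover obtain a' c' where "a = Suc a'" "c = Suc c'"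
    using assms(4,5) by (cases a; cases c) auto
  ultimately show ?thesis by (simp add: algebra_simps)
next
  case False
  then have "a = 1 \<and> b = 0 \<or> c = 1 \<and> d = 0" using assms(4,5) by linarith
  then show ?thesis by auto
qed

lemma Lshape_bound_a0:
  assumes "finite A" "thin A" "\<And>F. finite F \<Longrightarrow> eventually_infects (Lshape 0 b c d) A F"
  shows "b * c \<le> card A + (b + d)"
proof -
  consider "b = 0 \<or> c \<le> 1" | "b = 1" "2 \<le> c" | "2 \<le> b" "2 \<le> c" by linarith
  then show ?thesis
  proof cases
    case 1
    then have "b * c \<le> b" using mult_le_mono2[of c 1 b] by auto
    then show ?thesis by linarith
  next
    case 2
    have "c \<le> card (snd ` A)"
      by (rule card_occupied_rows_ge[OF assms(1) _ assms(3)]) (use 2 in \<open>simp_all add: mem_Lshape\<close>)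
    then show ?thesis using card_image_le[OF assms(1), of snd] 2 by simp
  next
    case 3
    have "Lshape 0 b c d = Lshape 1 (b - 1) c 0" using 3 by (auto simp: Lshape_def Rect_def)
    then have "eventually_infects (Lshape 1 (b - 1) c 0) A F" if "finite F" for F
      using assms(3)[OF that] by simp
    then have "(1 - 1) * (0 + 1) + (c - 1) * (b - 1 + 1) \<le> card A"
      by (rule Lshape_card_bound[OF assms(1,2)]) (use 3 in auto)
    then have "(c - 1) * b \<le> card A" using 3 by simp
    moreover obtain c' where "c = Suc c'" using 3 by (cases c) auto
    ultimately show ?thesis by (simp add: algebra_simps)
  qed
qed

lemma Lshape_spanning_bound:
  assumes "finite A" "thin A" "spans (Lshape a b c d) A"
  shows "b * c + a * d \<le> card A + (b + d)"
proof -
  have infects: "eventually_infects (Lshape a b c d) A F" if "finite F" for F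
    using spans_eventually_infects[OF finite_Lshape down_closed_Lshape assms(1,3) that] .
  consider "1 \<le> a" "1 \<le> c" | "a = 0" | "c = 0" by linarith
  then show ?thesis
  proof cases
    case 1
    then show ?thesis using Lshape_bound_a_c_pos[OF assms(1,2) infects] by blast
  next
    case 2
    then show ?thesis using Lshape_bound_a0[OF assms(1,2)] infects by simp
  next
    case 3
    have "eventually_infects (Lshape 0 d a b) (prod.swap ` A) F" if "finite F" for F
      using eventually_infects_swap[OF infects[of "prod.swap ` F"]] that 3
      by (simp add: Lshape_swap image_image)
    then have "d * a \<le> card (prod.swap ` A) + (d + b)"
      using Lshape_bound_a0[of "prod.swap ` A"] assms(1,2) by simp
    then show ?thesis using 3 by (simp add: card_image mult.commute add.commute)
  qed
qed

theorem mainTheorem18: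
  fixes a b c d :: nat
  shows "enat (b * c + a * d) \<le> gamma_thin (Rect (a + b) c \<union> Rect a (c + d)) + enat (b + d)"
proof -
  have "enat (b * c + a * d - (b + d)) \<le> gamma_thin (Lshape a b c d)"
    unfolding gamma_thin_def
  proof (rule INF_greatest)
    fix A assume "A \<in> {A. finite A \<and> thin A \<and> spans (Lshape a b c d) A}"
    then show "enat (b * c + a * d - (b + d)) \<le> enat (card A)"
      using Lshape_spanning_bound by fastforce
  qed
  then have "enat (b * c + a * d - (b + d)) + enat (b + d) \<le> gamma_thin (Lshape a b c d) + enat (b + d)"
    by (rule add_right_mono)
  moreover have "enat (b * c + a * d) \<le> enat (b * c + a * d - (b + d)) + enat (b + d)" by simp
  ultimately show ?thesis unfolding Lshape_def by (rule order_trans[rotated])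
qed

end
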